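(* Let $K$ be a field, $A=K[X_1,\ldots,X_m]$ with $m\ge2$, and let $N,k\in\mathbb{N}$ and $q=p^e$ for a prime $p$ and $e\ge0$. Let $J=(X_1^N+X_2^N+\cdots+X_m^N,\ (X_2^q,X_3^q,\ldots,X_m^q)^k)$. If $>$ denotes the graded reverse lexicographic order with $X_1>X_2>\cdots>X_m$, then $$\mathrm{in}_>(J)=(X_1^N,\ (X_2^q,X_3^q,\ldots,X_m^q)^k).$$
   Context: $\mathrm{in}_>(J)$ denotes the initial ideal of $J$, generated by leading monomials of elements of $J$ with respect to $>$. *)

theory Defs
  imports "HOL-Library.Poly_Mapping" "HOL-Computational_Algebra.Primes"
begin

text \<open>Multivariate polynomials over K: finitely supported maps from monomials
(exponent vectors nat to nat finitely supported, variable X_i has index i) to coefficients.\<close>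

type_synonym 'a mpoly = "(nat \<Rightarrow>\<^sub>0 nat) \<Rightarrow>\<^sub>0 'a"

definition polyring :: "nat \<Rightarrow> ('a::field) mpoly set" where
  "polyring m = {p. \<forall>t\<in>Poly_Mapping.keys p. Poly_Mapping.keys t \<subseteq> {1..m}}"

definition Var :: "nat \<Rightarrow> ('a::field) mpoly" where
  "Var i = Poly_Mapping.single (Poly_Mapping.single i 1) 1"

definition monom :: "(nat \<Rightarrow>\<^sub>0 nat) \<Rightarrow> ('a::field) mpoly" where
  "monom t = Poly_Mapping.single t 1"

definition is_ideal :: "nat \<Rightarrow> ('a::field) mpoly set \<Rightarrow> bool" where
  "is_ideal m I \<longleftrightarrow> I \<subseteq> polyring m \<and> 0 \<in> I \<and>
     (\<forall>a\<in>I. \<forall>b\<in>I. a + b \<in> I) \<and> (\<forall>c\<in>polyring m. \<forall>a\<in>I. c * a \<in> I)"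

definition gen_ideal :: "nat \<Rightarrow> ('a::field) mpoly set \<Rightarrow> 'a mpoly set" where
  "gen_ideal m S = \<Inter>{I. is_ideal m I \<and> S \<subseteq> I}"

definition ideal_mult :: "nat \<Rightarrow> ('a::field) mpoly set \<Rightarrow> 'a mpoly set \<Rightarrow> 'a mpoly set" where
  "ideal_mult m I J = gen_ideal m {a * b | a b. a \<in> I \<and> b \<in> J}"

fun ideal_pow :: "nat \<Rightarrow> ('a::field) mpoly set \<Rightarrow> nat \<Rightarrow> 'a mpoly set" where
  "ideal_pow m I 0 = polyring m"
| "ideal_pow m I (Suc k) = ideal_mult m I (ideal_pow m I k)"

definition tdeg :: "(nat \<Rightarrow>\<^sub>0 nat) \<Rightarrow> nat" where
  "tdeg t = (\<Sum>i\<in>Poly_Mapping.keys t. Poly_Mapping.lookup t i)"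

definition grevlex_gt :: "(nat \<Rightarrow>\<^sub>0 nat) \<Rightarrow> (nat \<Rightarrow>\<^sub>0 nat) \<Rightarrow> bool" where
  "grevlex_gt s t \<longleftrightarrow> tdeg s > tdeg t \<or>
     (tdeg s = tdeg t \<and> s \<noteq> t \<and>
      (let i = Max {j. Poly_Mapping.lookup s j \<noteq> Poly_Mapping.lookup t j} in Poly_Mapping.lookup s i < Poly_Mapping.lookup t i))"

definition lead_mon :: "('a::field) mpoly \<Rightarrow> (nat \<Rightarrow>\<^sub>0 nat)" where
  "lead_mon p = (THE t. t \<in> Poly_Mapping.keys p \<and> (\<forall>s\<in>Poly_Mapping.keys p. s \<noteq> t \<longrightarrow> grevlex_gt t s))"

definition init_ideal :: "nat \<Rightarrow> ('a::field) mpoly set \<Rightarrow> 'a mpoly set" where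
  "init_ideal m J = gen_ideal m {monom (lead_mon f) | f. f \<in> J \<and> f \<noteq> 0}"

end

theory Submission
  imports Defs
begin

text \<open>The ideal \<open>(X_2^q, ..., X_m^q)^k\<close> is the monomial ideal spanned by the monomials \<open>X^t\<close>
  with \<open>\<Sum>i\<ge>2. t_i div q \<ge> k\<close>, a set \<open>M\<close> of monomials that does not depend on the exponent of
  \<open>X_1\<close>, while \<open>f = X_1^N + ... + X_m^N\<close> has leading monomial \<open>X_1^N\<close>. Write an element of the
  ideal as \<open>g = h f + r\<close> with \<open>r\<close> in the monomial ideal and move the part of \<open>h\<close> supported in
  \<open>M\<close> into \<open>r\<close>. Then \<open>lead_mon (h f) = lead_mon h + lead_mon f\<close> lies outside \<open>M\<close>, so \<open>r\<close>
  cannot cancel it, and the leading monomial of \<open>g\<close> either lies in \<open>M\<close> or equals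
  \<open>lead_mon (h f)\<close>, a multiple of \<open>X_1^N\<close>. The reverse inclusion holds because \<open>X_1^N\<close> is the
  leading monomial of \<open>f\<close> and every monomial of the monomial ideal is its own leading monomial.\<close>

definition monoms :: "nat \<Rightarrow> (nat \<Rightarrow>\<^sub>0 nat) set" where
  "monoms m = {t. Poly_Mapping.keys t \<subseteq> {1..m}}"

lemma polyring_iff: "p \<in> polyring m \<longleftrightarrow> Poly_Mapping.keys p \<subseteq> monoms m"
  by (auto simp: polyring_def monoms_def)

lemma zero_in_monoms [simp]: "0 \<in> monoms m"
  by (simp add: monoms_def)

lemma single_in_monoms: "i \<in> {1..m} \<Longrightarrow> Poly_Mapping.single i n \<in> monoms m"
  by (simp add: monoms_def)

lemma monoms_add: "s \<in> monoms m \<Longrightarrow> t \<in> monoms m \<Longrightarrow> s + t \<in> monoms m"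
  using keys_add[of s t] by (auto simp: monoms_def)

lemma polyring_single: "t \<in> monoms m \<Longrightarrow> (Poly_Mapping.single t c :: 'a::field mpoly) \<in> polyring m"
  by (simp add: polyring_iff)

lemma polyring_add: "a \<in> polyring m \<Longrightarrow> b \<in> polyring m \<Longrightarrow> a + b \<in> polyring m"
  using keys_add[of a b] by (auto simp: polyring_iff)

lemma polyring_mult: "a \<in> polyring m \<Longrightarrow> b \<in> polyring m \<Longrightarrow> (a * b :: 'a::field mpoly) \<in> polyring m"
  using keys_mult[of a b] monoms_add by (fastforce simp: polyring_iff)

lemma is_ideal_polyring: "is_ideal m (polyring m :: 'a::field mpoly set)"
proof -
  have "0 \<in> polyring m" by (simp add: polyring_iff)
  then show ?thesis
    unfolding is_ideal_def using polyring_add polyring_mult by blast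
qed

lemma ideal_subset_polyring: "is_ideal m I \<Longrightarrow> I \<subseteq> polyring m"
  by (simp add: is_ideal_def)

lemma ideal_zero: "is_ideal m I \<Longrightarrow> 0 \<in> I"
  by (simp add: is_ideal_def)

lemma ideal_add_closed: "is_ideal m I \<Longrightarrow> a \<in> I \<Longrightarrow> b \<in> I \<Longrightarrow> a + b \<in> I"
  by (simp add: is_ideal_def)

lemma ideal_mult_closed: "is_ideal m I \<Longrightarrow> c \<in> polyring m \<Longrightarrow> a \<in> I \<Longrightarrow> c * a \<in> I"
  by (simp add: is_ideal_def)

lemma is_ideal_Inter:
  "F \<noteq> {} \<Longrightarrow> (\<And>I. I \<in> F \<Longrightarrow> is_ideal m I) \<Longrightarrow> is_ideal m (\<Inter>F)"
  unfolding is_ideal_def by (intro conjI ballI) blast+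

lemma is_ideal_gen_ideal: "S \<subseteq> polyring m \<Longrightarrow> is_ideal m (gen_ideal m S)"
  unfolding gen_ideal_def using is_ideal_polyring by (intro is_ideal_Inter) auto

lemma gen_ideal_superset: "S \<subseteq> gen_ideal m S"
  by (auto simp: gen_ideal_def)

lemma gen_ideal_least: "is_ideal m I \<Longrightarrow> S \<subseteq> I \<Longrightarrow> gen_ideal m S \<subseteq> I"
  by (auto simp: gen_ideal_def)

lemma ideal_sum_closed:
  assumes "is_ideal m I" "\<And>x. x \<in> A \<Longrightarrow> F x \<in> I"
  shows "sum F A \<in> I"
  using assms(2)
  by (induction A rule: infinite_finite_induct) (auto intro: ideal_zero ideal_add_closed assms(1))

lemma poly_mapping_sum_single:
  "p = (\<Sum>t\<in>Poly_Mapping.keys p. Poly_Mapping.single t (Poly_Mapping.lookup p t))"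
  by (rule poly_mapping_eqI)
     (auto simp: lookup_sum lookup_single when_def in_keys_iff sum.delta[OF finite_keys])

lemma ideal_if_monoms_in:
  assumes I: "is_ideal m I" and p: "p \<in> polyring m"
    and monoms: "\<And>t. t \<in> Poly_Mapping.keys p \<Longrightarrow> (monom t :: 'a::field mpoly) \<in> I"
  shows "p \<in> I"
proof -
  have "Poly_Mapping.single t (Poly_Mapping.lookup p t) \<in> I" if "t \<in> Poly_Mapping.keys p" for t
  proof -
    have "Poly_Mapping.single 0 (Poly_Mapping.lookup p t) * monom t \<in> I"
      using I polyring_single[OF zero_in_monoms[of m]] monoms[OF that] by (rule ideal_mult_closed)
    then show ?thesis by (simp add: monom_def mult_single)
  qed
  then show ?thesis
    by (subst poly_mapping_sum_single) (rule ideal_sum_closed[OF I])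
qed

lemma gen_ideal_insert:
  assumes I: "is_ideal m I" and f: "f \<in> polyring m"
  shows "gen_ideal m (insert f I) = {h * f + r | h r. h \<in> polyring m \<and> r \<in> I}"
    (is "?G = ?P")
proof
  note R = is_ideal_polyring[of m]
  have P: "h * f + r \<in> ?P" if "h \<in> polyring m" "r \<in> I" for h r
    using that by blast
  have "is_ideal m ?P"
  proof (unfold is_ideal_def, intro conjI ballI subsetI)
    fix a assume "a \<in> ?P"
    then show "a \<in> polyring m"
      using ideal_subset_polyring[OF I] f by (auto intro!: polyring_add polyring_mult)
  next
    show "0 \<in> ?P"
      using P[OF ideal_zero[OF R] ideal_zero[OF I]] by simp
  next
    fix a b :: "'a mpoly" assume "a \<in> ?P" "b \<in> ?P"
    then obtain h r h' r' where "a = h * f + r" "b = h' * f + r'"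
      and "h \<in> polyring m" "r \<in> I" "h' \<in> polyring m" "r' \<in> I"
      by blast
    then show "a + b \<in> ?P"
      using P[OF ideal_add_closed[OF R] ideal_add_closed[OF I], of h h' r r']
      by (simp add: algebra_simps)
  next
    fix c a :: "'a mpoly" assume "c \<in> polyring m" "a \<in> ?P"
    then obtain h r where "a = h * f + r" "h \<in> polyring m" "r \<in> I"
      by blast
    then show "c * a \<in> ?P"
      using P[OF ideal_mult_closed[OF R] ideal_mult_closed[OF I], of c h c r] \<open>c \<in> polyring m\<close>
      by (simp add: algebra_simps)
  qed
  moreover have "insert f I \<subseteq> ?P"
  proof -
    have "(1 :: 'a mpoly) \<in> polyring m"
      by (simp add: polyring_iff)
    then show ?thesis
      using P[of 1 0] P[OF ideal_zero[OF R]] ideal_zero[OF I] by auto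
  qed
  ultimately show "?G \<subseteq> ?P"
    by (rule gen_ideal_least)
next
  have "is_ideal m ?G"
    using ideal_subset_polyring[OF I] f by (intro is_ideal_gen_ideal) blast
  moreover have "f \<in> ?G" "I \<subseteq> ?G"
    using gen_ideal_superset[of "insert f I" m] by auto
  ultimately show "?P \<subseteq> ?G"
    by (auto intro!: ideal_add_closed ideal_mult_closed)
qed

lemma Var_pow: "(Var i :: 'a::field mpoly) ^ n = monom (Poly_Mapping.single i n)"
  by (induction n) (simp_all add: Var_def monom_def mult_single single_add[symmetric] add.commute)

lemma keys_monom [simp]: "Poly_Mapping.keys (monom t :: 'a::field mpoly) = {t}"
  by (simp add: monom_def)

lemma monom_neq_zero: "(monom t :: 'a::field mpoly) \<noteq> 0"
  using keys_monom[of t] by (metis empty_not_insert keys_zero)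

lemma monom_add: "(monom (s + t) :: 'a::field mpoly) = monom s * monom t"
  by (simp add: monom_def mult_single)

section \<open>Monomial ideals\<close>

definition monomial_ideal :: "nat \<Rightarrow> (nat \<Rightarrow>\<^sub>0 nat) set \<Rightarrow> ('a::field) mpoly set" where
  "monomial_ideal m M = {p \<in> polyring m. Poly_Mapping.keys p \<subseteq> M}"

definition monom_upclosed :: "nat \<Rightarrow> (nat \<Rightarrow>\<^sub>0 nat) set \<Rightarrow> bool" where
  "monom_upclosed m M \<longleftrightarrow> (\<forall>t\<in>M. \<forall>s\<in>monoms m. s + t \<in> M)"

lemma monomial_ideal_monoms: "monomial_ideal m (monoms m) = polyring m"
  by (auto simp: monomial_ideal_def polyring_iff)

lemma single_in_monomial_ideal:
  "t \<in> M \<Longrightarrow> t \<in> monoms m \<Longrightarrow> Poly_Mapping.single t c \<in> monomial_ideal m M"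
  by (simp add: monomial_ideal_def polyring_single)

lemma monomial_ideal_mult:
  assumes "a \<in> monomial_ideal m A" "b \<in> monomial_ideal m B"
    and "\<And>s t. s \<in> A \<Longrightarrow> t \<in> B \<Longrightarrow> s + t \<in> C"
  shows "(a * b :: 'a::field mpoly) \<in> monomial_ideal m C"
proof -
  have "Poly_Mapping.keys (a * b) \<subseteq> C"
    using assms keys_mult[of a b] unfolding monomial_ideal_def by blast
  then show ?thesis
    using assms polyring_mult[of a m b] unfolding monomial_ideal_def by blast
qed

lemma is_ideal_monomial_ideal:
  assumes "monom_upclosed m M"
  shows "is_ideal m (monomial_ideal m M :: 'a::field mpoly set)"
  unfolding is_ideal_def
proof (intro conjI ballI)
  fix a b :: "'a mpoly" assume "a \<in> monomial_ideal m M" "b \<in> monomial_ideal m M"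
  then show "a + b \<in> monomial_ideal m M"
    using keys_add[of a b] polyring_add[of a m b] unfolding monomial_ideal_def by blast
next
  fix c a :: "'a mpoly" assume "c \<in> polyring m" "a \<in> monomial_ideal m M"
  then show "c * a \<in> monomial_ideal m M"
    using assms monomial_ideal_mult[of c m "monoms m" a M M]
    by (auto simp: monomial_ideal_monoms monom_upclosed_def)
qed (auto simp: monomial_ideal_def polyring_iff)

lemma monomial_ideal_split:
  assumes "h \<in> polyring m"
  obtains h' h'' where "h = h' + h''" "Poly_Mapping.keys h' \<subseteq> monoms m - M"
    "h'' \<in> monomial_ideal m M"
proof -
  let ?part = "\<lambda>A. \<Sum>t\<in>A. Poly_Mapping.single t (Poly_Mapping.lookup h t)"
  have "h = ?part (Poly_Mapping.keys h - M \<union> Poly_Mapping.keys h \<inter> M)"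
    by (subst poly_mapping_sum_single) (simp add: Un_Diff_Int)
  also have "\<dots> = ?part (Poly_Mapping.keys h - M) + ?part (Poly_Mapping.keys h \<inter> M)"
    by (rule sum.union_disjoint) auto
  finally have "h = ?part (Poly_Mapping.keys h - M) + ?part (Poly_Mapping.keys h \<inter> M)" .
  moreover have "Poly_Mapping.keys (?part A) \<subseteq> A" for A
    by (rule order_trans[OF keys_sum]) auto
  moreover have "?part A \<in> polyring m" if "A \<subseteq> Poly_Mapping.keys h" for A
    using that assms
    by (intro ideal_sum_closed[OF is_ideal_polyring] polyring_single) (auto simp: polyring_iff)
  moreover have "Poly_Mapping.keys h \<subseteq> monoms m"
    using assms by (simp add: polyring_iff)
  ultimately show ?thesis
    using that[of "?part (Poly_Mapping.keys h - M)" "?part (Poly_Mapping.keys h \<inter> M)"]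
    unfolding monomial_ideal_def by blast
qed

section \<open>Powers of the ideal generated by \<open>X\<^sub>2\<^sup>q, \<dots>, X\<^sub>m\<^sup>q\<close>\<close>

definition qpow_monoms :: "nat \<Rightarrow> nat \<Rightarrow> nat \<Rightarrow> (nat \<Rightarrow>\<^sub>0 nat) set" where
  "qpow_monoms m q k = {t \<in> monoms m. k \<le> (\<Sum>i\<in>{2..m}. Poly_Mapping.lookup t i div q)}"

lemma qpow_monoms_add:
  assumes "s \<in> qpow_monoms m q k" "t \<in> qpow_monoms m q l"
  shows "s + t \<in> qpow_monoms m q (k + l)"
proof -
  have "(\<Sum>i\<in>{2..m}. Poly_Mapping.lookup s i div q) + (\<Sum>i\<in>{2..m}. Poly_Mapping.lookup t i div q)
      \<le> (\<Sum>i\<in>{2..m}. Poly_Mapping.lookup (s + t) i div q)"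
    unfolding sum.distrib[symmetric] lookup_add by (intro sum_mono) (subst div_add1_eq, simp)
  then show ?thesis
    using assms monoms_add by (auto simp: qpow_monoms_def)
qed

lemma monom_upclosed_qpow_monoms: "monom_upclosed m (qpow_monoms m q k)"
  unfolding monom_upclosed_def
  using qpow_monoms_add[of _ m q 0 _ k] by (simp add: qpow_monoms_def)

lemma qpow_monoms_0: "qpow_monoms m q 0 = monoms m"
  by (simp add: qpow_monoms_def)

lemma qpow_monoms_add_Var1:
  "t + Poly_Mapping.single 1 n \<in> qpow_monoms m q k \<Longrightarrow> t \<in> monoms m \<Longrightarrow> t \<in> qpow_monoms m q k"
  by (simp add: qpow_monoms_def lookup_add lookup_single)

lemma single_in_qpow_monoms_1:
  assumes "i \<in> {2..m}" "0 < q"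
  shows "Poly_Mapping.single i q \<in> qpow_monoms m q 1"
proof -
  have "(\<Sum>j\<in>{2..m}. Poly_Mapping.lookup (Poly_Mapping.single i q) j div q)
      = (\<Sum>j\<in>{2..m}. if j = i then 1 else 0)"
    using assms by (intro sum.cong) (auto simp: lookup_single)
  then have "(\<Sum>j\<in>{2..m}. Poly_Mapping.lookup (Poly_Mapping.single i q) j div q) = 1"
    using assms(1) by simp
  then show ?thesis
    using assms by (simp add: qpow_monoms_def single_in_monoms)
qed

lemma qpow_monoms_Suc_obtain:
  assumes t: "t \<in> qpow_monoms m q (Suc k)"
  obtains i t' where "i \<in> {2..m}" "t = Poly_Mapping.single i q + t'" "t' \<in> qpow_monoms m q k"
proof -
  have "\<exists>i\<in>{2..m}. q \<le> Poly_Mapping.lookup t i"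
  proof (rule ccontr)
    assume "\<not> ?thesis"
    then have "(\<Sum>i\<in>{2..m}. Poly_Mapping.lookup t i div q) = 0"
      by (simp add: not_le div_less)
    then show False
      using t by (simp add: qpow_monoms_def)
  qed
  then obtain i where i: "i \<in> {2..m}" "q \<le> Poly_Mapping.lookup t i"
    by blast
  define t' where "t' = t - Poly_Mapping.single i q"
  have lookup_t: "Poly_Mapping.lookup t j = Poly_Mapping.lookup (Poly_Mapping.single i q + t') j" for j
    using i by (auto simp: t'_def lookup_add lookup_minus lookup_single when_def)
  then have "t = Poly_Mapping.single i q + t'"
    by (rule poly_mapping_eqI)
  moreover have "t' \<in> qpow_monoms m q k"
  proof -
    have "q > 0"
    proof (rule ccontr)
      assume "\<not> q > 0"
      then show False
        using t by (simp add: qpow_monoms_def)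
    qed
    have "Poly_Mapping.keys t' \<subseteq> Poly_Mapping.keys t"
      using lookup_t by (auto simp: in_keys_iff lookup_add)
    moreover have "Poly_Mapping.lookup t j div q
        = Poly_Mapping.lookup t' j div q + (if j = i then 1 else 0)" for j
      using \<open>q > 0\<close> by (simp add: lookup_t lookup_add lookup_single when_def div_add_self1)
    then have "(\<Sum>j\<in>{2..m}. Poly_Mapping.lookup t j div q)
        = (\<Sum>j\<in>{2..m}. Poly_Mapping.lookup t' j div q) + 1"
      using i(1) by (simp add: sum.distrib)
    ultimately show ?thesis
      using t by (auto simp: qpow_monoms_def monoms_def)
  qed
  ultimately show ?thesis
    using that i by blast
qed

lemma gen_ideal_Var_pow_subset:
  assumes "0 < q"
  shows "gen_ideal m {(Var i :: 'a::field mpoly) ^ q | i. i \<in> {2..m}}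
    \<subseteq> monomial_ideal m (qpow_monoms m q 1)"
proof (rule gen_ideal_least[OF is_ideal_monomial_ideal[OF monom_upclosed_qpow_monoms]], clarify)
  fix i assume "i \<in> {2..m}"
  then have "Poly_Mapping.single i q \<in> qpow_monoms m q 1"
    using assms by (rule single_in_qpow_monoms_1)
  then show "(Var i :: 'a mpoly) ^ q \<in> monomial_ideal m (qpow_monoms m q 1)"
    unfolding Var_pow monom_def
    by (rule single_in_monomial_ideal) (use \<open>i \<in> {2..m}\<close> in \<open>simp add: single_in_monoms\<close>)
qed

lemma ideal_pow_Var_pow:
  assumes q: "0 < q"
  shows "ideal_pow m (gen_ideal m {(Var i :: 'a::field mpoly) ^ q | i. i \<in> {2..m}}) k
    = monomial_ideal m (qpow_monoms m q k)"
proof (induction k)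
  case 0
  then show ?case
    by (simp add: qpow_monoms_0 monomial_ideal_monoms)
next
  case (Suc k)
  define G where "G = gen_ideal m {(Var i :: 'a mpoly) ^ q | i. i \<in> {2..m}}"
  let ?P = "{a * b | a b. a \<in> G \<and> b \<in> monomial_ideal m (qpow_monoms m q k)}"
  have G: "G \<subseteq> monomial_ideal m (qpow_monoms m q 1)"
    unfolding G_def using q by (rule gen_ideal_Var_pow_subset)
  have "ideal_pow m G (Suc k) = gen_ideal m ?P"
    using Suc by (simp add: ideal_mult_def G_def)
  also have "\<dots> = monomial_ideal m (qpow_monoms m q (Suc k))"
  proof
    have "?P \<subseteq> monomial_ideal m (qpow_monoms m q (Suc k))"
    proof clarify
      fix a b :: "'a mpoly" assume "a \<in> G" "b \<in> monomial_ideal m (qpow_monoms m q k)"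
      then show "a * b \<in> monomial_ideal m (qpow_monoms m q (Suc k))"
        using G qpow_monoms_add[of _ m q 1 _ k] by (intro monomial_ideal_mult) auto
    qed
    then show "gen_ideal m ?P \<subseteq> monomial_ideal m (qpow_monoms m q (Suc k))"
      by (intro gen_ideal_least is_ideal_monomial_ideal monom_upclosed_qpow_monoms)
  next
    have "?P \<subseteq> polyring m"
      using G polyring_mult unfolding monomial_ideal_def by blast
    then have P: "is_ideal m (gen_ideal m ?P)"
      by (rule is_ideal_gen_ideal)
    show "monomial_ideal m (qpow_monoms m q (Suc k)) \<subseteq> gen_ideal m ?P"
    proof
      fix p :: "'a mpoly" assume p: "p \<in> monomial_ideal m (qpow_monoms m q (Suc k))"
      show "p \<in> gen_ideal m ?P"
      proof (rule ideal_if_monoms_in[OF P])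
        show "p \<in> polyring m"
          using p by (simp add: monomial_ideal_def)
      next
        fix t assume "t \<in> Poly_Mapping.keys p"
        then have "t \<in> qpow_monoms m q (Suc k)"
          using p by (auto simp: monomial_ideal_def)
        then obtain i t' where i: "i \<in> {2..m}" and t: "t = Poly_Mapping.single i q + t'"
          and t': "t' \<in> qpow_monoms m q k"
          by (rule qpow_monoms_Suc_obtain)
        have "Var i ^ q \<in> G"
          unfolding G_def using i by (intro subsetD[OF gen_ideal_superset]) blast
        moreover have "monom t' \<in> monomial_ideal m (qpow_monoms m q k)"
          using t' unfolding monom_def by (intro single_in_monomial_ideal) (auto simp: qpow_monoms_def)
        moreover have "(monom t :: 'a mpoly) = Var i ^ q * monom t'"
          by (simp add: t Var_pow monom_add)
        ultimately have "monom t \<in> ?P"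
          by (simp only:) blast
        then show "monom t \<in> gen_ideal m ?P"
          by (rule subsetD[OF gen_ideal_superset])
      qed
    qed
  qed
  finally show ?case
    unfolding G_def .
qed

section \<open>The graded reverse lexicographic order\<close>

lemma tdeg_eq_sum:
  "finite S \<Longrightarrow> Poly_Mapping.keys t \<subseteq> S \<Longrightarrow> tdeg t = sum (Poly_Mapping.lookup t) S"
  unfolding tdeg_def by (rule sum.mono_neutral_left) (auto simp: in_keys_iff)

lemma tdeg_add: "tdeg (s + t) = tdeg s + tdeg t"
proof -
  let ?S = "Poly_Mapping.keys s \<union> Poly_Mapping.keys t"
  have "tdeg (s + t) = sum (Poly_Mapping.lookup (s + t)) ?S"
    using keys_add[of s t] by (intro tdeg_eq_sum) auto
  also have "\<dots> = tdeg s + tdeg t"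
    by (simp add: lookup_add sum.distrib tdeg_eq_sum[of ?S s] tdeg_eq_sum[of ?S t])
  finally show ?thesis .
qed

lemma tdeg_single: "tdeg (Poly_Mapping.single i n) = n"
  by (simp add: tdeg_def)

lemma grevlex_gt_iff:
  "grevlex_gt s t \<longleftrightarrow> tdeg t < tdeg s \<or> tdeg s = tdeg t \<and>
     (\<exists>i. Poly_Mapping.lookup s i < Poly_Mapping.lookup t i
       \<and> (\<forall>j>i. Poly_Mapping.lookup s j = Poly_Mapping.lookup t j))"
proof -
  define D where "D = {j. Poly_Mapping.lookup s j \<noteq> Poly_Mapping.lookup t j}"
  have "finite D"
    by (rule finite_subset[of _ "Poly_Mapping.keys s \<union> Poly_Mapping.keys t"])
       (auto simp: D_def in_keys_iff)
  have "(s \<noteq> t \<and> Poly_Mapping.lookup s (Max D) < Poly_Mapping.lookup t (Max D)) \<longleftrightarrow>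
     (\<exists>i. Poly_Mapping.lookup s i < Poly_Mapping.lookup t i
       \<and> (\<forall>j>i. Poly_Mapping.lookup s j = Poly_Mapping.lookup t j))"
  proof
    assume "s \<noteq> t \<and> Poly_Mapping.lookup s (Max D) < Poly_Mapping.lookup t (Max D)"
    moreover have "Poly_Mapping.lookup s j = Poly_Mapping.lookup t j" if "Max D < j" for j
      using that Max_ge[OF \<open>finite D\<close>, of j] by (force simp: D_def)
    ultimately show "\<exists>i. Poly_Mapping.lookup s i < Poly_Mapping.lookup t i
       \<and> (\<forall>j>i. Poly_Mapping.lookup s j = Poly_Mapping.lookup t j)"
      by blast
  next
    assume "\<exists>i. Poly_Mapping.lookup s i < Poly_Mapping.lookup t i
       \<and> (\<forall>j>i. Poly_Mapping.lookup s j = Poly_Mapping.lookup t j)"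
    then obtain i where i: "Poly_Mapping.lookup s i < Poly_Mapping.lookup t i"
      "\<forall>j>i. Poly_Mapping.lookup s j = Poly_Mapping.lookup t j"
      by blast
    then have "Max D = i"
      using \<open>finite D\<close> by (intro Max_eqI) (auto simp: D_def intro: leI)
    then show "s \<noteq> t \<and> Poly_Mapping.lookup s (Max D) < Poly_Mapping.lookup t (Max D)"
      using i by auto
  qed
  then show ?thesis
    unfolding grevlex_gt_def Let_def D_def[symmetric] by blast
qed

lemma grevlex_gt_irrefl: "\<not> grevlex_gt s s"
  by (simp add: grevlex_gt_def)

lemma grevlex_gt_trans:
  assumes "grevlex_gt s t" "grevlex_gt t u"
  shows "grevlex_gt s u"
proof (cases "tdeg s = tdeg t \<and> tdeg t = tdeg u")
  case True
  then obtain i i' where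
      i: "Poly_Mapping.lookup s i < Poly_Mapping.lookup t i"
        "\<forall>j>i. Poly_Mapping.lookup s j = Poly_Mapping.lookup t j"
    and i': "Poly_Mapping.lookup t i' < Poly_Mapping.lookup u i'"
        "\<forall>j>i'. Poly_Mapping.lookup t j = Poly_Mapping.lookup u j"
    using assms by (auto simp: grevlex_gt_iff)
  then have "Poly_Mapping.lookup s (max i i') < Poly_Mapping.lookup u (max i i')
      \<and> (\<forall>j>max i i'. Poly_Mapping.lookup s j = Poly_Mapping.lookup u j)"
    by (cases i i' rule: linorder_cases) (auto simp: max_def)
  then show ?thesis
    using True by (auto simp: grevlex_gt_iff)
next
  case False
  then show ?thesis
    using assms by (auto simp: grevlex_gt_iff)
qed

lemma grevlex_gt_asym: "grevlex_gt s t \<Longrightarrow> \<not> grevlex_gt t s"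
  using grevlex_gt_trans grevlex_gt_irrefl by blast

lemma grevlex_gt_total: "s \<noteq> t \<Longrightarrow> grevlex_gt s t \<or> grevlex_gt t s"
proof -
  assume "s \<noteq> t"
  define D where "D = {j. Poly_Mapping.lookup s j \<noteq> Poly_Mapping.lookup t j}"
  have "finite D"
    by (rule finite_subset[of _ "Poly_Mapping.keys s \<union> Poly_Mapping.keys t"])
       (auto simp: D_def in_keys_iff)
  moreover have "D \<noteq> {}"
    using \<open>s \<noteq> t\<close> poly_mapping_eqI[of s t] by (auto simp: D_def)
  ultimately have "Poly_Mapping.lookup s (Max D) \<noteq> Poly_Mapping.lookup t (Max D)"
    using Max_in unfolding D_def by blast
  moreover have "{j. Poly_Mapping.lookup t j \<noteq> Poly_Mapping.lookup s j} = D"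
    by (auto simp: D_def)
  ultimately show ?thesis
    using \<open>s \<noteq> t\<close> unfolding grevlex_gt_def Let_def D_def by auto
qed

definition grevlex_le :: "(nat \<Rightarrow>\<^sub>0 nat) \<Rightarrow> (nat \<Rightarrow>\<^sub>0 nat) \<Rightarrow> bool" where
  "grevlex_le s t \<longleftrightarrow> s = t \<or> grevlex_gt t s"

interpretation grevlex: linorder grevlex_le "\<lambda>s t. grevlex_gt t s"
  by unfold_locales
    (use grevlex_gt_total in \<open>auto simp: grevlex_le_def dest: grevlex_gt_asym intro: grevlex_gt_trans\<close>)

lemma grevlex_gt_add: "grevlex_gt s t \<Longrightarrow> grevlex_gt (s + u) (t + u)"
  by (simp add: grevlex_gt_iff tdeg_add lookup_add)

lemma grevlex_le_add: "grevlex_le s t \<Longrightarrow> grevlex_le (s + u) (t + u)"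
  by (auto simp: grevlex_le_def grevlex_gt_add)

lemma grevlex_le_add_mono: "grevlex_le s t \<Longrightarrow> grevlex_le s' t' \<Longrightarrow> grevlex_le (s + s') (t + t')"
  using grevlex_le_add[of s t s'] grevlex_le_add[of s' t' t] by (simp add: add.commute grevlex.order.trans)

lemma grevlex_less_add_mono:
  "grevlex_gt t s \<Longrightarrow> grevlex_le s' t' \<Longrightarrow> grevlex_gt (t + t') (s + s')"
  using grevlex_gt_add[of t s s'] grevlex_le_add[of s' t' t]
  by (simp add: add.commute grevlex.less_le_trans)

section \<open>Leading monomials\<close>

lemma lead_mon_eqI:
  assumes "t \<in> Poly_Mapping.keys p" "\<And>s. s \<in> Poly_Mapping.keys p \<Longrightarrow> grevlex_le s t"
  shows "lead_mon p = t"
  unfolding lead_mon_def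
proof (rule the_equality)
  show "t \<in> Poly_Mapping.keys p \<and> (\<forall>s\<in>Poly_Mapping.keys p. s \<noteq> t \<longrightarrow> grevlex_gt t s)"
    using assms by (auto simp: grevlex_le_def)
next
  fix t' assume "t' \<in> Poly_Mapping.keys p \<and> (\<forall>s\<in>Poly_Mapping.keys p. s \<noteq> t' \<longrightarrow> grevlex_gt t' s)"
  then show "t' = t"
    using assms grevlex.leD unfolding grevlex_le_def by blast
qed

lemma lead_mon_Max: "p \<noteq> 0 \<Longrightarrow> lead_mon p = grevlex.Max (Poly_Mapping.keys p)"
  by (rule lead_mon_eqI) simp_all

lemma lead_mon_in_keys: "p \<noteq> 0 \<Longrightarrow> lead_mon p \<in> Poly_Mapping.keys p"
  by (simp add: lead_mon_Max)

lemma lead_mon_in_monoms: "p \<in> polyring m \<Longrightarrow> p \<noteq> 0 \<Longrightarrow> lead_mon p \<in> monoms m"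
  using lead_mon_in_keys unfolding polyring_iff by blast

lemma grevlex_le_lead_mon:
  assumes "s \<in> Poly_Mapping.keys p"
  shows "grevlex_le s (lead_mon p)"
proof -
  have "p \<noteq> 0"
    using assms by auto
  then show ?thesis
    using assms by (simp add: lead_mon_Max)
qed

lemma lead_mon_monom: "lead_mon (monom t :: 'a::field mpoly) = t"
  by (rule lead_mon_eqI) simp_all

lemma keys_mult_grevlex_le:
  assumes "\<And>s. s \<in> Poly_Mapping.keys p \<Longrightarrow> grevlex_le s a"
    and "\<And>t. t \<in> Poly_Mapping.keys q \<Longrightarrow> grevlex_le t b"
    and "x \<in> Poly_Mapping.keys (p * q)"
  shows "grevlex_le x (a + b)"
proof -
  obtain s t where "x = s + t" "s \<in> Poly_Mapping.keys p" "t \<in> Poly_Mapping.keys q"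
    using assms(3) keys_mult[of p q] by blast
  then show ?thesis
    using assms(1,2) grevlex_le_add_mono by simp
qed

lemma keys_mult_grevlex_less:
  assumes "\<And>s. s \<in> Poly_Mapping.keys p \<Longrightarrow> grevlex_gt a s"
    and "\<And>t. t \<in> Poly_Mapping.keys q \<Longrightarrow> grevlex_le t b"
    and "x \<in> Poly_Mapping.keys (p * q)"
  shows "grevlex_gt (a + b) x"
proof -
  obtain s t where "x = s + t" "s \<in> Poly_Mapping.keys p" "t \<in> Poly_Mapping.keys q"
    using assms(3) keys_mult[of p q] by blast
  then show ?thesis
    using assms(1,2) grevlex_less_add_mono by simp
qed

lemma lookup_mult_lead_mon:
  fixes p q :: "'a::field mpoly"
  shows "Poly_Mapping.lookup (p * q) (lead_mon p + lead_mon q)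
    = Poly_Mapping.lookup p (lead_mon p) * Poly_Mapping.lookup q (lead_mon q)"
proof -
  define a b where "a = lead_mon p" and "b = lead_mon q"
  define p' where "p' = p - Poly_Mapping.single a (Poly_Mapping.lookup p a)"
  define q' where "q' = q - Poly_Mapping.single b (Poly_Mapping.lookup q b)"
  have p': "grevlex_gt a s" if "s \<in> Poly_Mapping.keys p'" for s
    using that grevlex_le_lead_mon[of s p]
    by (auto simp: p'_def a_def grevlex_le_def in_keys_iff lookup_minus lookup_single when_def
        split: if_splits)
  have q': "grevlex_gt b t" if "t \<in> Poly_Mapping.keys q'" for t
    using that grevlex_le_lead_mon[of t q]
    by (auto simp: q'_def b_def grevlex_le_def in_keys_iff lookup_minus lookup_single when_def
        split: if_splits)
  have "p * q = Poly_Mapping.single a (Poly_Mapping.lookup p a)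
        * Poly_Mapping.single b (Poly_Mapping.lookup q b)
      + q' * Poly_Mapping.single a (Poly_Mapping.lookup p a) + p' * q"
    by (simp add: p'_def q'_def algebra_simps)
  moreover have "b + a \<notin> Poly_Mapping.keys (q' * Poly_Mapping.single a (Poly_Mapping.lookup p a))"
  proof
    assume "b + a \<in> Poly_Mapping.keys (q' * Poly_Mapping.single a (Poly_Mapping.lookup p a))"
    moreover have "grevlex_le t a"
      if "t \<in> Poly_Mapping.keys (Poly_Mapping.single a (Poly_Mapping.lookup p a))" for t
      using that by (simp add: grevlex_le_def split: if_splits)
    ultimately have "grevlex_gt (b + a) (b + a)"
      using keys_mult_grevlex_less[OF q'] by blast
    then show False
      by (simp add: grevlex_gt_irrefl)
  qed
  moreover have "a + b \<notin> Poly_Mapping.keys (p' * q)"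
  proof
    assume "a + b \<in> Poly_Mapping.keys (p' * q)"
    then have "grevlex_gt (a + b) (a + b)"
      using keys_mult_grevlex_less[OF p'] grevlex_le_lead_mon[of _ q] unfolding b_def by blast
    then show False
      by (simp add: grevlex_gt_irrefl)
  qed
  ultimately show ?thesis
    by (simp add: a_def b_def lookup_add mult_single in_keys_iff add.commute)
qed

lemma lead_mon_mult:
  fixes p q :: "'a::field mpoly"
  assumes "p \<noteq> 0" "q \<noteq> 0"
  shows "lead_mon (p * q) = lead_mon p + lead_mon q"
proof (rule lead_mon_eqI)
  show "lead_mon p + lead_mon q \<in> Poly_Mapping.keys (p * q)"
    using lead_mon_in_keys[OF assms(1)] lead_mon_in_keys[OF assms(2)]
    by (simp add: lookup_mult_lead_mon in_keys_iff)
qed (use grevlex_le_lead_mon in \<open>blast intro: keys_mult_grevlex_le\<close>)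

lemma grevlex_gt_single:
  assumes "i < j" "0 < N"
  shows "grevlex_gt (Poly_Mapping.single i N) (Poly_Mapping.single j N)"
  unfolding grevlex_gt_iff tdeg_single
  using assms by (auto simp: lookup_single when_def intro!: exI[of _ j])

lemma keys_sum_Var_pow:
  assumes "finite A" "0 < N"
  shows "Poly_Mapping.keys (\<Sum>i\<in>A. (Var i :: 'a::field mpoly) ^ N) = (\<lambda>i. Poly_Mapping.single i N) ` A"
proof -
  let ?E = "\<lambda>i. Poly_Mapping.single i N"
  have "inj_on ?E A"
    using assms(2)
    by (auto intro!: inj_onI dest: arg_cong[of _ _ "\<lambda>t. Poly_Mapping.lookup t _"]
        simp: lookup_single when_def split: if_splits)
  then have "Poly_Mapping.lookup (\<Sum>i\<in>A. (Var i :: 'a mpoly) ^ N) t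
      = (\<Sum>s\<in>?E ` A. Poly_Mapping.lookup (Poly_Mapping.single s 1) t)" for t
    by (simp add: Var_pow monom_def lookup_sum sum.reindex)
  also have "\<dots> t = (if t \<in> ?E ` A then 1 else 0)" for t
    using assms(1) by (simp add: lookup_single when_def sum.delta)
  finally show ?thesis
    by (auto simp: in_keys_iff split: if_splits)
qed

lemma lead_mon_sum_Var_pow:
  assumes "1 \<le> m" "0 < N"
  shows "lead_mon (\<Sum>i\<in>{1..m}. (Var i :: 'a::field mpoly) ^ N) = Poly_Mapping.single 1 N"
proof (rule lead_mon_eqI)
  show "Poly_Mapping.single 1 N \<in> Poly_Mapping.keys (\<Sum>i\<in>{1..m}. (Var i :: 'a mpoly) ^ N)"
    using assms by (simp add: keys_sum_Var_pow)
next
  fix s assume "s \<in> Poly_Mapping.keys (\<Sum>i\<in>{1..m}. (Var i :: 'a mpoly) ^ N)"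
  then obtain i where "i \<in> {1..m}" "s = Poly_Mapping.single i N"
    using assms by (auto simp: keys_sum_Var_pow)
  then show "grevlex_le s (Poly_Mapping.single 1 N)"
  proof (cases "i = 1")
    case False
    then show ?thesis
      using assms grevlex_gt_single[of 1 i N] \<open>i \<in> {1..m}\<close> \<open>s = _\<close> by (simp add: grevlex_le_def)
  qed (simp add: grevlex_le_def)
qed

section \<open>Initial ideals\<close>

lemma is_ideal_init_ideal:
  assumes "J \<subseteq> polyring m"
  shows "is_ideal m (init_ideal m J :: 'a::field mpoly set)"
  unfolding init_ideal_def
proof (rule is_ideal_gen_ideal, clarify)
  fix g :: "'a mpoly" assume "g \<in> J" "g \<noteq> 0"
  then have "lead_mon g \<in> monoms m"
    using assms by (blast intro: lead_mon_in_monoms)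
  then show "monom (lead_mon g) \<in> polyring m"
    unfolding monom_def by (rule polyring_single)
qed

lemma monom_lead_mon_in_init_ideal:
  "g \<in> J \<Longrightarrow> g \<noteq> 0 \<Longrightarrow> monom (lead_mon g) \<in> init_ideal m J"
  unfolding init_ideal_def by (rule subsetD[OF gen_ideal_superset]) blast

lemma monomial_ideal_subset_init_ideal:
  assumes J: "J \<subseteq> polyring m" and M: "monomial_ideal m M \<subseteq> J"
  shows "monomial_ideal m M \<subseteq> (init_ideal m J :: 'a::field mpoly set)"
proof
  fix p :: "'a mpoly" assume p: "p \<in> monomial_ideal m M"
  show "p \<in> init_ideal m J"
  proof (rule ideal_if_monoms_in[OF is_ideal_init_ideal[OF J]])
    show "p \<in> polyring m"
      using p by (simp add: monomial_ideal_def)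
  next
    fix t assume "t \<in> Poly_Mapping.keys p"
    then have "monom t \<in> monomial_ideal m M"
      using p unfolding monom_def monomial_ideal_def by (auto intro: polyring_single simp: polyring_iff)
    then have "monom (lead_mon (monom t :: 'a mpoly)) \<in> init_ideal m J"
      using M monom_neq_zero by (intro monom_lead_mon_in_init_ideal) auto
    then show "monom t \<in> init_ideal m J"
      by (simp add: lead_mon_monom)
  qed
qed

lemma lead_mon_gen_ideal_insert:
  assumes M: "monom_upclosed m M"
    and f: "f \<in> polyring m" "f \<noteq> 0"
    and sat: "\<And>t. t \<in> monoms m \<Longrightarrow> t + lead_mon f \<in> M \<Longrightarrow> t \<in> M"
    and g: "g \<in> gen_ideal m (insert f (monomial_ideal m M))" "g \<noteq> 0"
  shows "lead_mon g \<in> M \<or> (\<exists>u\<in>monoms m. lead_mon g = u + lead_mon f)"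
proof (cases "lead_mon g \<in> M")
  case False
  let ?I = "monomial_ideal m M :: 'a mpoly set"
  have I: "is_ideal m ?I"
    using M by (rule is_ideal_monomial_ideal)
  obtain h r where g_eq: "g = h * f + r" and h: "h \<in> polyring m" and r: "r \<in> ?I"
    using g(1) gen_ideal_insert[OF I f(1)] by blast
  obtain h' h'' where h_eq: "h = h' + h''" and h': "Poly_Mapping.keys h' \<subseteq> monoms m - M"
    and h'': "h'' \<in> ?I"
    using monomial_ideal_split[OF h] .
  define r' where "r' = f * h'' + r"
  have "r' \<in> ?I"
    unfolding r'_def using I f(1) h'' r by (intro ideal_add_closed ideal_mult_closed)
  then have r': "Poly_Mapping.lookup r' t = 0" if "t \<notin> M" for t
    using that by (auto simp: monomial_ideal_def in_keys_iff)
  have g_eq': "g = h' * f + r'"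
    by (simp add: g_eq h_eq r'_def algebra_simps)
  have "h' \<noteq> 0"
  proof
    assume "h' = 0"
    then have "Poly_Mapping.lookup g (lead_mon g) = 0"
      using False r' by (simp add: g_eq')
    then show False
      using lead_mon_in_keys[OF g(2)] by (simp add: in_keys_iff)
  qed
  define v where "v = lead_mon h' + lead_mon f"
  have hf: "lead_mon (h' * f) = v" "h' * f \<noteq> 0"
    using \<open>h' \<noteq> 0\<close> f(2) by (simp_all add: v_def lead_mon_mult)
  have "lead_mon h' \<in> monoms m - M"
    using h' lead_mon_in_keys[OF \<open>h' \<noteq> 0\<close>] by blast
  then have "v \<notin> M"
    using sat unfolding v_def by blast
  then have "v \<in> Poly_Mapping.keys g"
    using lead_mon_in_keys[OF hf(2)] r' by (simp add: g_eq' hf(1) lookup_add in_keys_iff)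
  moreover have "lead_mon g \<in> Poly_Mapping.keys (h' * f)"
    using lead_mon_in_keys[OF g(2)] False r' by (simp add: g_eq' lookup_add in_keys_iff)
  ultimately have "lead_mon g = v"
    using grevlex_le_lead_mon[of v g] grevlex_le_lead_mon[of "lead_mon g" "h' * f"] hf(1)
    by (simp add: grevlex.order.antisym)
  then show ?thesis
    using \<open>lead_mon h' \<in> monoms m - M\<close> unfolding v_def by blast
qed simp

lemma init_ideal_gen_ideal_insert:
  assumes M: "monom_upclosed m M"
    and f: "f \<in> polyring m" "f \<noteq> 0"
    and sat: "\<And>t. t \<in> monoms m \<Longrightarrow> t + lead_mon f \<in> M \<Longrightarrow> t \<in> M"
  shows "init_ideal m (gen_ideal m (insert f (monomial_ideal m M)))
    = gen_ideal m (insert (monom (lead_mon f)) (monomial_ideal m M :: 'a::field mpoly set))"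
    (is "init_ideal m ?J = ?R")
proof -
  have I: "is_ideal m (monomial_ideal m M :: 'a mpoly set)"
    using M by (rule is_ideal_monomial_ideal)
  have J: "is_ideal m ?J"
    using f(1) ideal_subset_polyring[OF I] by (intro is_ideal_gen_ideal) blast
  have J_gens: "f \<in> ?J" "monomial_ideal m M \<subseteq> ?J"
    using gen_ideal_superset[of "insert f (monomial_ideal m M)" m] by auto
  have lead_f: "lead_mon f \<in> monoms m"
    using f by (rule lead_mon_in_monoms)
  have R: "is_ideal m ?R"
    using ideal_subset_polyring[OF I] polyring_single[OF lead_f] unfolding monom_def
    by (intro is_ideal_gen_ideal) blast
  have R_gens: "monom (lead_mon f) \<in> ?R" "monomial_ideal m M \<subseteq> ?R"
    using gen_ideal_superset[of "insert (monom (lead_mon f)) (monomial_ideal m M)" m] by auto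
  have "monom (lead_mon g) \<in> ?R" if g: "g \<in> ?J" "g \<noteq> 0" for g
  proof -
    consider "lead_mon g \<in> M" | u where "u \<in> monoms m" "lead_mon g = u + lead_mon f"
      using lead_mon_gen_ideal_insert[OF M f sat g] by blast
    then show ?thesis
    proof cases
      case 1
      have "lead_mon g \<in> monoms m"
        using g ideal_subset_polyring[OF J] by (blast intro: lead_mon_in_monoms)
      then have "monom (lead_mon g) \<in> monomial_ideal m M"
        using 1 unfolding monom_def by (rule single_in_monomial_ideal[rotated])
      then show ?thesis
        using R_gens(2) by blast
    next
      case 2
      have "monom u \<in> polyring m"
        using 2(1) unfolding monom_def by (rule polyring_single)
      then have "monom u * monom (lead_mon f) \<in> ?R"
        using R R_gens(1) by (intro ideal_mult_closed)
      then show ?thesis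
        using 2(2) by (simp add: monom_add)
    qed
  qed
  then have "init_ideal m ?J \<subseteq> ?R"
    unfolding init_ideal_def by (intro gen_ideal_least[OF R]) blast
  moreover have "monom (lead_mon f) \<in> init_ideal m ?J" "monomial_ideal m M \<subseteq> init_ideal m ?J"
    using f(2) J_gens ideal_subset_polyring[OF J]
    by (simp_all add: monom_lead_mon_in_init_ideal monomial_ideal_subset_init_ideal)
  then have "?R \<subseteq> init_ideal m ?J"
    using is_ideal_init_ideal[OF ideal_subset_polyring[OF J]] by (intro gen_ideal_least) simp_all
  ultimately show ?thesis
    by (rule subset_antisym)
qed

theorem lemma5p1:
  fixes m N k p e q :: nat
  assumes "m \<ge> 2" and "N \<ge> 1" and "prime p" and "q = p ^ e"
  defines "Q \<equiv> ideal_pow m (gen_ideal m {(Var i :: 'a::field mpoly) ^ q | i. i \<in> {2..m}}) k"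
  shows "init_ideal m (gen_ideal m ({\<Sum>i\<in>{1..m}. Var i ^ N} \<union> Q))
           = gen_ideal m ({Var 1 ^ N} \<union> Q)"
proof -
  define f where "f = (\<Sum>i\<in>{1..m}. (Var i :: 'a mpoly) ^ N)"
  have "0 < q"
    using assms(3,4) by (simp add: prime_gt_0_nat)
  then have Q: "Q = monomial_ideal m (qpow_monoms m q k)"
    unfolding Q_def by (rule ideal_pow_Var_pow)
  have f_keys: "Poly_Mapping.keys f = (\<lambda>i. Poly_Mapping.single i N) ` {1..m}"
    using assms(2) unfolding f_def by (simp add: keys_sum_Var_pow)
  have "f \<in> polyring m"
    by (auto simp: f_keys polyring_iff single_in_monoms)
  moreover have "f \<noteq> 0"
    using assms(1) f_keys by force
  moreover have lead_f: "lead_mon f = Poly_Mapping.single 1 N"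
    using assms(1,2) unfolding f_def by (intro lead_mon_sum_Var_pow) simp_all
  ultimately have "init_ideal m (gen_ideal m (insert f Q)) = gen_ideal m (insert (monom (lead_mon f)) Q)"
    unfolding Q using qpow_monoms_add_Var1
    by (intro init_ideal_gen_ideal_insert monom_upclosed_qpow_monoms) simp_all
  then show ?thesis
    unfolding lead_f by (simp add: f_def Var_pow)
qed

end
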